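(* For $P\ge2$ and all integers $n>2$, $\beta_P(n)=\prod_{p\le P}\beta_{(p)}(n)$, where \[ \beta_P(n)=\sum_{\substack{d,v\ge1:\ dv^2=n^2-4\\ p\mid v\Rightarrow p\le P}}\frac1v\prod_{p\le P}\Big(1-\frac{\chi_d(p)}{p}\Big)^{-1},\qquad \beta_{(p)}(n)=\sum_{b\ge0}\frac1{p^b}\Big(1-\frac1p\chi_{(n^2-4)p^{-2b}}(p)\Big)^{-1}I_{p^b}(n), \] with $p$ denoting primes.
   Context: Sums over $d$ run over positive non-square discriminants, i.e. positive integers $d$, not perfect squares, with $d\equiv0,1\pmod4$; $v$ runs over positive integers. For such $d$, $\chi_d:\mathbb{Z}\to\{0,\pm1\}$ is the completely multiplicative function with: for odd primes $p$, $\chi_d(p)=0$ if $p\mid d$, $1$ if $p\nmid d$ and $x^2\equiv d\pmod p$ is solvable, $-1$ if insolvable; $\chi_d(2)=1,-1,0$ according as $d\equiv1\pmod 8$, $d\equiv5\pmod8$, $d\equiv0\pmod4$; $\chi_d(-1)=1$. For a prime $p$, $b\in\mathbb{N}_0$ and $n\in\mathbb{Z}$: $I_{p^b}(n)=1$ if $n^2\equiv4\pmod{p^{2b}}$ and, in case $p=2$, additionally $(n^2-4)2^{-2b}\equiv0,1\pmod 4$; otherwise $I_{p^b}(n)=0$. (The term of $\beta_{(p)}(n)$ with $I_{p^b}(n)=0$ is $0$; when $I_{p^b}(n)=1$, $(n^2-4)p^{-2b}$ is a positive non-square discriminant.) *)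

theory Defs
  imports "HOL-Number_Theory.Number_Theory"
begin

definition pos_nonsq_disc :: "int \<Rightarrow> bool" where
  "pos_nonsq_disc d \<longleftrightarrow> d > 0 \<and> (\<nexists>k::int. d = k^2) \<and> (d mod 4 = 0 \<or> d mod 4 = 1)"

definition chi_prime :: "int \<Rightarrow> nat \<Rightarrow> int" where
  "chi_prime d p =
     (if p = 2 then (if d mod 8 = 1 then 1 else if d mod 8 = 5 then -1 else 0)
      else if int p dvd d then 0
      else if (\<exists>x::int. [x^2 = d] (mod int p)) then 1 else -1)"

definition chi :: "int \<Rightarrow> int \<Rightarrow> int" where
  "chi d m = (if m = 0 then 0 else
     (\<Prod>p\<in>prime_factors (nat \<bar>m\<bar>). chi_prime d p ^ multiplicity p (nat \<bar>m\<bar>)))"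

definition I_ind :: "nat \<Rightarrow> nat \<Rightarrow> int \<Rightarrow> bool" where
  "I_ind p b n \<longleftrightarrow> [n^2 = 4] (mod (int p)^(2*b)) \<and>
     (p = 2 \<longrightarrow> ((n^2 - 4) div 2^(2*b)) mod 4 \<in> {0, 1})"

definition beta_P :: "real \<Rightarrow> int \<Rightarrow> real" where
  "beta_P P n = (\<Sum>(d,v)\<in>{(d::int, v::nat). pos_nonsq_disc d \<and> v \<ge> 1 \<and> d * int v^2 = n^2 - 4
                      \<and> (\<forall>p. prime p \<and> p dvd v \<longrightarrow> real p \<le> P)}.
      (1 / real v) * (\<Prod>p\<in>{p::nat. prime p \<and> real p \<le> P}. inverse (1 - of_int (chi d (int p)) / real p)))"

definition beta_loc :: "nat \<Rightarrow> int \<Rightarrow> real" where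
  "beta_loc p n = (\<Sum>b. (1 / real p ^ b)
      * inverse (1 - (1 / real p) * of_int (chi ((n^2 - 4) div (int p)^(2*b)) (int p)))
      * of_bool (I_ind p b n))"

end

theory Submission
  imports Defs
begin

text \<open>Since I_{p^b}(n) forces p^(2b) to divide n^2 - 4, every local series is a finite sum, and
  the product over p \<le> P expands into a sum over exponent vectors (b_p). Such a vector corresponds
  to v = \<Prod> p^(b_p) and d = (n^2 - 4)/v^2, and conversely b_p is the multiplicity of p in v.
  Removing the full p-part from v multiplies d by a square prime to p, which changes neither
  chi_d(p) nor, for p = 2, the residue of d mod 4. Hence the I-conditions say exactly that d is
  a discriminant, and the local terms multiply to (1/v) \<Prod> (1 - chi_d(p)/p)^(-1).\<close>

lemma chi_prime_eq: "prime p \<Longrightarrow> chi d (int p) = chi_prime d p"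
  by (simp add: chi_def prime_prime_factors multiplicity_prime prime_gt_0_nat)

lemma mod_8_mult_odd_square:
  fixes d u :: int
  assumes "odd u"
  shows "(d * u^2) mod 8 = d mod 8"
proof -
  obtain m where u: "u = 2 * m + 1" using assms by (rule oddE)
  have "even (m * (m + 1))" by simp
  then obtain j where j: "m * (m + 1) = 2 * j" by blast
  have "u^2 = 4 * (m * (m + 1)) + 1" by (simp add: u algebra_simps power2_eq_square)
  then have "u^2 = 8 * j + 1" by (simp add: j)
  then have "d * u^2 = d + 8 * (d * j)" by (simp add: algebra_simps)
  then show ?thesis by simp
qed

lemma mod_4_mult_odd_square:
  fixes d u :: int
  assumes "odd u"
  shows "(d * u^2) mod 4 = d mod 4"
proof -
  have "(d * u^2) mod 4 = (d * u^2) mod 8 mod 4" by (simp add: mod_mod_cancel)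
  also have "\<dots> = d mod 8 mod 4" by (simp add: mod_8_mult_odd_square[OF assms])
  also have "\<dots> = d mod 4" by (simp add: mod_mod_cancel)
  finally show ?thesis .
qed

lemma QuadRes_mult_coprime_square:
  fixes m d u :: int
  assumes "coprime u m"
  shows "QuadRes m (d * u^2) \<longleftrightarrow> QuadRes m d"
proof
  obtain w where w: "[u * w = 1] (mod m)" using cong_solve_coprime_int[OF assms] by blast
  assume "QuadRes m (d * u^2)"
  then obtain x where x: "[x^2 = d * u^2] (mod m)" unfolding QuadRes_def by blast
  have "[(x * w)^2 = d * (u * w)^2] (mod m)"
    using cong_mult[OF x cong_refl[of "w^2"]] by (simp add: power_mult_distrib algebra_simps)
  also have "[d * (u * w)^2 = d * 1^2] (mod m)" using w by (intro cong_mult cong_pow) auto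
  finally show "QuadRes m d" unfolding QuadRes_def by auto
next
  assume "QuadRes m d"
  then obtain x where x: "[x^2 = d] (mod m)" unfolding QuadRes_def by blast
  have "[(x * u)^2 = d * u^2] (mod m)" using x by (simp add: power_mult_distrib cong_mult)
  then show "QuadRes m (d * u^2)" unfolding QuadRes_def by blast
qed

lemma chi_prime_mult_coprime_square:
  fixes d u :: int
  assumes p: "prime p" and u: "\<not> int p dvd u"
  shows "chi_prime (d * u^2) p = chi_prime d p"
proof (cases "p = 2")
  case True
  then have "odd u" using u by auto
  then show ?thesis using True by (simp add: chi_prime_def mod_8_mult_odd_square)
next
  case False
  have p_int: "prime (int p)" using p by simp
  have "int p dvd d * u^2 \<longleftrightarrow> int p dvd d"
    using p_int u by (simp add: prime_dvd_mult_iff prime_dvd_power_iff)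
  moreover have "QuadRes (int p) (d * u^2) \<longleftrightarrow> QuadRes (int p) d"
    using prime_imp_coprime[OF p_int u] by (intro QuadRes_mult_coprime_square) (simp add: coprime_commute)
  ultimately show ?thesis
    using False by (simp add: chi_prime_def QuadRes_def)
qed

lemma square_minus_4_not_square:
  fixes n k :: int
  assumes "n > 2"
  shows "n^2 - 4 \<noteq> k^2"
proof
  assume eq: "n^2 - 4 = k^2"
  have "\<bar>k\<bar>^2 < n^2" using eq by simp
  then have "\<bar>k\<bar> < n" by (rule power_less_imp_less_base) (use assms in simp)
  then have "k^2 \<le> (n - 1)^2"
    using power_mono[of "\<bar>k\<bar>" "n - 1" 2] by simp
  then show False using eq assms by (simp add: power2_eq_square algebra_simps)
qed

lemma square_minus_4_pos:
  fixes n :: int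
  assumes "n > 2"
  shows "n^2 - 4 > 0"
  using power_strict_mono[of 2 n 2] assms by simp

lemma I_ind_imp_dvd: "I_ind p b n \<Longrightarrow> int p ^ (2 * b) dvd n^2 - 4"
  by (simp add: I_ind_def cong_iff_dvd_diff)

lemma I_ind_imp_less:
  assumes "prime p" "n > 2" "I_ind p b n"
  shows "b < nat (n^2 - 4)"
proof -
  have "p \<ge> 2" using assms(1) by (rule prime_ge_2_nat)
  have pos: "n^2 - 4 > 0" using assms(2) by (rule square_minus_4_pos)
  then have "int p ^ (2 * b) \<le> n^2 - 4"
    using I_ind_imp_dvd[OF assms(3)] by (rule zdvd_imp_le[rotated])
  then have "p ^ (2 * b) \<le> nat (n^2 - 4)" using pos by (simp add: le_nat_iff)
  moreover have "b < p ^ (2 * b)"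
  proof -
    have "b < 2 ^ b" by (rule less_exp)
    also have "\<dots> \<le> p ^ b" using \<open>p \<ge> 2\<close> by (rule power_mono) simp
    also have "\<dots> \<le> p ^ (2 * b)" using \<open>p \<ge> 2\<close> by (intro power_increasing) auto
    finally show ?thesis .
  qed
  ultimately show ?thesis by linarith
qed

definition beta_loc_term :: "nat \<Rightarrow> int \<Rightarrow> nat \<Rightarrow> real" where
  "beta_loc_term p n b = (1 / real p ^ b)
      * inverse (1 - (1 / real p) * of_int (chi ((n^2 - 4) div (int p)^(2*b)) (int p)))
      * of_bool (I_ind p b n)"

lemma beta_loc_eq_sum:
  assumes "prime p" "n > 2"
  shows "beta_loc p n = (\<Sum>b<nat (n^2 - 4). beta_loc_term p n b)"
  unfolding beta_loc_def beta_loc_term_def[symmetric]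
  by (rule suminf_finite) (auto simp: beta_loc_term_def dest: I_ind_imp_less[OF assms])

lemma pos_nonsq_disc_cofactor_iff:
  fixes n d :: int
  assumes "n > 2" "v > 0" "n^2 - 4 = d * int v^2"
  shows "pos_nonsq_disc d \<longleftrightarrow> d mod 4 \<in> {0, 1}"
proof -
  have "d > 0"
    using square_minus_4_pos[OF assms(1)] assms(2,3) by (simp add: zero_less_mult_iff)
  moreover have "d \<noteq> k^2" for k
    using square_minus_4_not_square[OF assms(1), of "k * int v"] assms(3)
    by (auto simp: power_mult_distrib)
  ultimately show ?thesis unfolding pos_nonsq_disc_def by auto
qed

lemma multiplicity_cofactor_square:
  fixes D d :: int and v :: nat
  assumes "prime p" "v > 0" "D = d * int v^2"
  obtains w where "D = int p ^ (2 * multiplicity p v) * (d * int w^2)" "\<not> p dvd w"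
proof
  define m where "m = multiplicity p v"
  define w where "w = v div p ^ m"
  have v: "v = p ^ m * w" unfolding w_def m_def by (simp add: multiplicity_dvd)
  show "D = int p ^ (2 * m) * (d * int w^2)"
    using assms(3) by (simp add: v power_mult_distrib power_mult algebra_simps)
  show "\<not> p dvd w"
    unfolding w_def m_def using assms(1,2) by (intro multiplicity_decompose) auto
qed

lemma I_ind_multiplicity_iff:
  assumes "prime p" "v > 0" "n^2 - 4 = d * int v^2"
  shows "I_ind p (multiplicity p v) n \<longleftrightarrow> (p = 2 \<longrightarrow> d mod 4 \<in> {0, 1})"
proof -
  obtain w where D: "n^2 - 4 = int p ^ (2 * multiplicity p v) * (d * int w^2)" and "\<not> p dvd w"
    using multiplicity_cofactor_square[OF assms] .
  have div: "(n^2 - 4) div int p ^ (2 * multiplicity p v) = d * int w^2"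
    unfolding D using prime_gt_0_nat[OF assms(1)] by simp
  have "odd (int w)" if "p = 2" using \<open>\<not> p dvd w\<close> that by simp
  then show ?thesis
    unfolding I_ind_def cong_iff_dvd_diff D div by (auto simp: mod_4_mult_odd_square)
qed

lemma chi_div_multiplicity:
  assumes "prime p" "v > 0" "n^2 - 4 = d * int v^2"
  shows "chi ((n^2 - 4) div int p ^ (2 * multiplicity p v)) (int p) = chi d (int p)"
proof -
  obtain w where D: "n^2 - 4 = int p ^ (2 * multiplicity p v) * (d * int w^2)" and "\<not> p dvd w"
    using multiplicity_cofactor_square[OF assms] .
  then have "\<not> int p dvd int w" by simp
  then show ?thesis
    unfolding D using prime_gt_0_nat[OF assms(1)]
    by (simp add: chi_prime_eq[OF assms(1)] chi_prime_mult_coprime_square[OF assms(1)])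
qed

lemma all_I_ind_multiplicity_iff:
  assumes "\<forall>p\<in>S. prime p" "2 \<in> S" "n > 2" "v > 0" "n^2 - 4 = d * int v^2"
  shows "(\<forall>p\<in>S. I_ind p (multiplicity p v) n) \<longleftrightarrow> pos_nonsq_disc d"
proof -
  have "I_ind p (multiplicity p v) n \<longleftrightarrow> (p = 2 \<longrightarrow> d mod 4 \<in> {0, 1})" if "p \<in> S" for p
    using assms(1) that by (intro I_ind_multiplicity_iff[OF _ assms(4,5)]) simp
  then have "(\<forall>p\<in>S. I_ind p (multiplicity p v) n) \<longleftrightarrow> d mod 4 \<in> {0, 1}"
    using assms(2) by auto
  then show ?thesis using pos_nonsq_disc_cofactor_iff[OF assms(3-5)] by simp
qed

lemma power_dvd_if_prime_power_dvd:
  fixes x y :: "'a :: factorial_semiring"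
  assumes "x \<noteq> 0" "\<And>p. prime p \<Longrightarrow> p ^ (k * multiplicity p x) dvd y"
  shows "x ^ k dvd y"
proof (cases "y = 0")
  case False
  show ?thesis
  proof (rule multiplicity_le_imp_dvd)
    show "x ^ k \<noteq> 0" using assms(1) by simp
    fix p :: 'a assume p: "prime p"
    have "k * multiplicity p x \<le> multiplicity p y"
      using False p assms(2)[OF p] by (intro multiplicity_geI) auto
    then show "multiplicity p (x ^ k) \<le> multiplicity p y"
      using assms(1) p by (simp add: prime_elem_multiplicity_power_distrib)
  qed
qed simp

lemma prod_power_multiplicity_eq:
  fixes v :: nat
  assumes "finite S" "\<forall>p\<in>S. prime p" "v > 0" "prime_factors v \<subseteq> S"
  shows "(\<Prod>p\<in>S. p ^ multiplicity p v) = v"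
proof -
  have "(\<Prod>p\<in>S. p ^ multiplicity p v) = (\<Prod>p\<in>prime_factors v. p ^ multiplicity p v)"
    using assms by (intro prod.mono_neutral_right)
      (auto simp: in_prime_factors_iff not_dvd_imp_multiplicity_0)
  also have "\<dots> = v" using assms(3) by (simp add: prod_prime_factors)
  finally show ?thesis .
qed

lemma prime_factors_prod_prime_powers:
  fixes h :: "nat \<Rightarrow> nat"
  assumes "finite S" "\<forall>p\<in>S. prime p"
  shows "prime_factors (\<Prod>p\<in>S. p ^ h p) \<subseteq> S"
proof
  fix q assume q: "q \<in> prime_factors (\<Prod>p\<in>S. p ^ h p)"
  then have "prime q" "multiplicity q (\<Prod>p\<in>S. p ^ h p) > 0"
    by (auto simp: in_prime_factors_iff prime_multiplicity_gt_zero_iff)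
  then show "q \<in> S"
    using assms by (auto simp: multiplicity_prod_prime_powers split: if_splits)
qed

text \<open>The bound on the exponents is implied by the I-conditions (lemma I_ind_imp_less);
  it only serves to make the local factors finite sums.\<close>
definition exponent_vectors :: "nat set \<Rightarrow> int \<Rightarrow> (nat \<Rightarrow> nat) set" where
  "exponent_vectors S n = {h \<in> S \<rightarrow>\<^sub>E {..<nat (n^2 - 4)}. \<forall>p\<in>S. I_ind p (h p) n}"

definition factor_pairs :: "nat set \<Rightarrow> int \<Rightarrow> (int \<times> nat) set" where
  "factor_pairs S n =
     {(d, v). pos_nonsq_disc d \<and> v \<ge> 1 \<and> d * int v^2 = n^2 - 4 \<and> prime_factors v \<subseteq> S}"

lemma multiplicities_mem_exponent_vectors:
  assumes "\<forall>p\<in>S. prime p" "2 \<in> S" "n > 2" "(d, v) \<in> factor_pairs S n"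
  shows "restrict (\<lambda>p. multiplicity p v) S \<in> exponent_vectors S n"
proof -
  have "v > 0" "n^2 - 4 = d * int v^2" "pos_nonsq_disc d"
    using assms(4) by (auto simp: factor_pairs_def)
  then have "\<forall>p\<in>S. I_ind p (multiplicity p v) n"
    using all_I_ind_multiplicity_iff[OF assms(1-3)] by simp
  then show ?thesis
    using assms(1) by (auto simp: exponent_vectors_def dest: I_ind_imp_less[OF _ assms(3)])
qed

lemma cofactor_mem_factor_pairs:
  assumes "finite S" "\<forall>p\<in>S. prime p" "2 \<in> S" "n > 2" "h \<in> exponent_vectors S n"
  defines "v \<equiv> \<Prod>p\<in>S. p ^ h p"
  shows "((n^2 - 4) div int v^2, v) \<in> factor_pairs S n"
proof -
  have multiplicity_v: "multiplicity q v = (if q \<in> S then h q else 0)" if "prime q" for q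
    unfolding v_def using assms(1,2) that by (intro multiplicity_prod_prime_powers) auto
  have "v > 0"
    unfolding v_def using assms(2) by (intro prod_pos) (auto simp: prime_gt_0_nat)
  have h: "\<forall>p\<in>S. I_ind p (h p) n"
    using assms(5) by (simp add: exponent_vectors_def)
  have "v ^ 2 dvd nat \<bar>n^2 - 4\<bar>"
  proof (rule power_dvd_if_prime_power_dvd)
    show "v \<noteq> 0" using \<open>v > 0\<close> by simp
    fix q :: nat assume "prime q"
    show "q ^ (2 * multiplicity q v) dvd nat \<bar>n^2 - 4\<bar>"
      using I_ind_imp_dvd h \<open>prime q\<close> by (cases "q \<in> S") (simp_all add: multiplicity_v)
  qed
  then have "int v ^ 2 dvd n^2 - 4" by simp
  then have "n^2 - 4 = (n^2 - 4) div int v^2 * int v^2" by simp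
  moreover have "\<forall>p\<in>S. I_ind p (multiplicity p v) n"
    using h assms(2) by (simp add: multiplicity_v)
  ultimately show ?thesis
    using all_I_ind_multiplicity_iff[OF assms(2-4) \<open>v > 0\<close>] \<open>v > 0\<close>
      prime_factors_prod_prime_powers[OF assms(1,2), of h]
    by (auto simp: factor_pairs_def v_def Suc_le_eq)
qed

lemma bij_betw_multiplicities:
  assumes S: "finite S" "\<forall>p\<in>S. prime p" "2 \<in> S" and n: "n > 2"
  shows "bij_betw (\<lambda>(d, v). restrict (\<lambda>p. multiplicity p v) S) (factor_pairs S n) (exponent_vectors S n)"
proof -
  define V where "V h = (\<Prod>p\<in>S. p ^ h p)" for h :: "nat \<Rightarrow> nat"
  have left: "V (restrict (\<lambda>p. multiplicity p v) S) = v \<and> (n^2 - 4) div int v^2 = d"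
    if "(d, v) \<in> factor_pairs S n" for d v
  proof
    have T: "v > 0" "d * int v^2 = n^2 - 4" "prime_factors v \<subseteq> S"
      using that by (auto simp: factor_pairs_def)
    show "V (restrict (\<lambda>p. multiplicity p v) S) = v"
      unfolding V_def using prod_power_multiplicity_eq[OF S(1,2) T(1,3)] by (simp cong: prod.cong)
    show "(n^2 - 4) div int v^2 = d"
      using T(1) by (simp flip: T(2))
  qed
  have right: "restrict (\<lambda>p. multiplicity p (V h)) S = h" if "h \<in> exponent_vectors S n" for h
  proof -
    have "restrict (\<lambda>p. multiplicity p (V h)) S = restrict h S"
      unfolding V_def using S(1,2) by (intro restrict_ext) (simp add: multiplicity_prod_prime_powers)
    also have "\<dots> = h" using that by (auto simp: exponent_vectors_def intro: PiE_restrict)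
    finally show ?thesis .
  qed
  show ?thesis
    by (rule bij_betw_byWitness[where f' = "\<lambda>h. ((n^2 - 4) div int (V h)^2, V h)"])
      (use left right multiplicities_mem_exponent_vectors[OF S(2,3) n]
          cofactor_mem_factor_pairs[OF S n, folded V_def] in auto)
qed

lemma prod_beta_loc_term_multiplicity:
  assumes "finite S" "\<forall>p\<in>S. prime p" "(d, v) \<in> factor_pairs S n"
  shows "(\<Prod>p\<in>S. beta_loc_term p n (multiplicity p v))
    = 1 / real v * (\<Prod>p\<in>S. inverse (1 - of_int (chi d (int p)) / real p))"
proof -
  have v: "v > 0" "prime_factors v \<subseteq> S" "n^2 - 4 = d * int v^2" "d mod 4 \<in> {0, 1}"
    using assms(3) by (auto simp: factor_pairs_def pos_nonsq_disc_def)
  have "beta_loc_term p n (multiplicity p v)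
      = 1 / real p ^ multiplicity p v * inverse (1 - of_int (chi d (int p)) / real p)" if "p \<in> S" for p
    using that assms(2) v(4) I_ind_multiplicity_iff[OF _ v(1,3)] chi_div_multiplicity[OF _ v(1,3)]
    by (simp add: beta_loc_term_def)
  then have "(\<Prod>p\<in>S. beta_loc_term p n (multiplicity p v))
      = (\<Prod>p\<in>S. 1 / real p ^ multiplicity p v * inverse (1 - of_int (chi d (int p)) / real p))"
    by (rule prod.cong[OF refl])
  also have "\<dots> = (\<Prod>p\<in>S. 1 / real p ^ multiplicity p v)
      * (\<Prod>p\<in>S. inverse (1 - of_int (chi d (int p)) / real p))"
    by (rule prod.distrib)
  also have "(\<Prod>p\<in>S. 1 / real p ^ multiplicity p v) = 1 / real v"
    using arg_cong[OF prod_power_multiplicity_eq[OF assms(1,2) v(1,2)], of real]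
    by (simp add: prod_dividef of_nat_prod)
  finally show ?thesis .
qed

theorem lemma4p1:
  fixes P :: real and n :: int
  assumes "P \<ge> 2" and "n > 2"
  shows "beta_P P n = (\<Prod>p\<in>{p::nat. prime p \<and> real p \<le> P}. beta_loc p n)"
proof -
  define S where "S = {p::nat. prime p \<and> real p \<le> P}"
  have S: "finite S" "\<forall>p\<in>S. prime p" "2 \<in> S"
    using assms(1) by (auto simp: S_def intro: finite_subset[of _ "{..nat \<lfloor>P\<rfloor>}"] le_nat_floor)
  have "(\<Prod>p\<in>S. beta_loc p n) = (\<Prod>p\<in>S. \<Sum>b<nat (n^2 - 4). beta_loc_term p n b)"
    using S(2) assms(2) by (simp add: beta_loc_eq_sum)
  also have "\<dots> = (\<Sum>h\<in>S \<rightarrow>\<^sub>E {..<nat (n^2 - 4)}. \<Prod>p\<in>S. beta_loc_term p n (h p))"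
    using S(1) by (rule prod_sum_PiE) simp
  also have "\<dots> = (\<Sum>h\<in>exponent_vectors S n. \<Prod>p\<in>S. beta_loc_term p n (h p))"
    unfolding exponent_vectors_def using S(1)
    by (intro sum.mono_neutral_right) (auto simp: finite_PiE beta_loc_term_def)
  also have "\<dots> = (\<Sum>x\<in>factor_pairs S n. \<Prod>p\<in>S. beta_loc_term p n
      ((\<lambda>(d, v). restrict (\<lambda>p. multiplicity p v) S) x p))"
    by (rule sum.reindex_bij_betw[OF bij_betw_multiplicities[OF S assms(2)], symmetric])
  also have "\<dots> = (\<Sum>(d, v)\<in>factor_pairs S n.
      1 / real v * (\<Prod>p\<in>S. inverse (1 - of_int (chi d (int p)) / real p)))"
    using prod_beta_loc_term_multiplicity[OF S(1,2)] by (intro sum.cong) auto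
  also have "\<dots> = beta_P P n"
    unfolding beta_P_def S_def factor_pairs_def by (intro sum.cong) (auto simp: in_prime_factors_iff)
  finally show ?thesis by (simp add: S_def)
qed

end
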